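(* Let $k<n$ and let $A_1,\ldots,A_k$ be $n\times n$ ASMs, $A_s=[a_{ijs}]$, such that for all $1\le i,j\le n$ the vector $(a_{ij1},\ldots,a_{ijk})$ is $(1,* )$-alternating. Then there exist $n\times n$ permutation matrices $A_{k+1},\ldots,A_n$ such that $[A_1,\ldots,A_k,A_{k+1},\ldots,A_n]$ is an $n\times n\times n$ ASHM.
   Context: An $n\times n$ alternating sign matrix (ASM) is an $n\times n$ matrix with entries in $\{0,1,-1\}$ such that in every row and column the nonzeros alternate in sign, beginning and ending with $+1$. An $n\times n\times n$ hypermatrix $[A_1,\ldots,A_n]$ with $A_s=[a_{ijs}]_{i,j}$ is an ASHM if all entries are in $\{0,\pm1\}$ and in every line (obtained by fixing two of the three indices) the nonzeros alternate in sign beginning and ending with $+1$. A $(0,\pm1)$-vector is $(1,* )$-alternating if its nonzeros (if any) alternate in sign and the first nonzero is $1$ (the zero vector qualifies). *)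

theory Defs
  imports "HOL-Combinatorics.Permutations"
begin

text \<open>Indices run over 1..n. A vector is represented by the list of its entries.\<close>

definition sign_entries :: "int list \<Rightarrow> bool" where
  "sign_entries xs \<longleftrightarrow> (\<forall>x\<in>set xs. x \<in> {-1, 0, 1})"

definition one_star_alt :: "int list \<Rightarrow> bool" where
  "one_star_alt xs \<longleftrightarrow> sign_entries xs \<and>
     (let ys = filter (\<lambda>x. x \<noteq> 0) xs in \<forall>i<length ys. ys ! i = (-1) ^ i)"

definition alt_sign_vec :: "int list \<Rightarrow> bool" where
  "alt_sign_vec xs \<longleftrightarrow> one_star_alt xs \<and>
     (let ys = filter (\<lambda>x. x \<noteq> 0) xs in ys \<noteq> [] \<and> last ys = 1)"

definition row :: "(nat \<Rightarrow> nat \<Rightarrow> int) \<Rightarrow> nat \<Rightarrow> nat \<Rightarrow> int list" where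
  "row M n i = map (\<lambda>j. M i j) [1..<n+1]"

definition col :: "(nat \<Rightarrow> nat \<Rightarrow> int) \<Rightarrow> nat \<Rightarrow> nat \<Rightarrow> int list" where
  "col M n j = map (\<lambda>i. M i j) [1..<n+1]"

definition is_ASM :: "nat \<Rightarrow> (nat \<Rightarrow> nat \<Rightarrow> int) \<Rightarrow> bool" where
  "is_ASM n M \<longleftrightarrow> (\<forall>i\<in>{1..n}. alt_sign_vec (row M n i)) \<and> (\<forall>j\<in>{1..n}. alt_sign_vec (col M n j))"

definition is_perm_matrix :: "nat \<Rightarrow> (nat \<Rightarrow> nat \<Rightarrow> int) \<Rightarrow> bool" where
  "is_perm_matrix n M \<longleftrightarrow> (\<exists>\<sigma>. \<sigma> permutes {1..n} \<and>
      (\<forall>i\<in>{1..n}. \<forall>j\<in>{1..n}. M i j = (if \<sigma> i = j then 1 else 0)))"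

text \<open>Hypermatrix [A_1,...,A_n] given by H s i j = a_{ijs}; a line fixes two of the three indices.\<close>
definition is_ASHM :: "nat \<Rightarrow> (nat \<Rightarrow> nat \<Rightarrow> nat \<Rightarrow> int) \<Rightarrow> bool" where
  "is_ASHM n H \<longleftrightarrow>
     (\<forall>i\<in>{1..n}. \<forall>j\<in>{1..n}. alt_sign_vec (map (\<lambda>s. H s i j) [1..<n+1])) \<and>
     (\<forall>i\<in>{1..n}. \<forall>s\<in>{1..n}. alt_sign_vec (map (\<lambda>j. H s i j) [1..<n+1])) \<and>
     (\<forall>j\<in>{1..n}. \<forall>s\<in>{1..n}. alt_sign_vec (map (\<lambda>i. H s i j) [1..<n+1]))"

end

theory Submission
  imports Defs
begin

(* Call position (i,j) open if the vertical line (a_ij1,...,a_ijk) has an even number of nonzeros,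
   i.e. sums to 0, and closed if it sums to 1. Summing the k ASMs along a row or column shows that
   every row and every column has exactly k closed positions, so the open positions form an
   (n-k)-regular bipartite relation. By Hall's theorem it decomposes into n-k permutations, and
   taking their permutation matrices as A_{k+1},...,A_n appends exactly one 1 to each open vertical
   line and nothing to each closed one, which makes every vertical line alternating. *)

definition hall_condition :: "'i set \<Rightarrow> ('i \<Rightarrow> 'a set) \<Rightarrow> bool" where
  "hall_condition I S \<longleftrightarrow> (\<forall>J\<subseteq>I. card J \<le> card (\<Union>(S ` J)))"

lemma hall_conditionD: "hall_condition I S \<Longrightarrow> J \<subseteq> I \<Longrightarrow> card J \<le> card (\<Union>(S ` J))"
  by (simp add: hall_condition_def)

lemma hall_violation_after_removal:
  assumes I: "finite I" and hall: "hall_condition I S" and J: "J \<subseteq> I"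
    and viol: "card (\<Union>((S(i := S i - {x})) ` J)) < card J"
  shows "i \<in> J" and "card (\<Union>(S ` (J - {i})) \<union> (S i - {x})) \<le> card (J - {i})"
proof -
  show iJ: "i \<in> J"
  proof (rule ccontr)
    assume "i \<notin> J"
    then have "(S(i := S i - {x})) ` J = S ` J" by auto
    then show False using hall_conditionD[OF hall J] viol by simp
  qed
  have "\<Union>((S(i := S i - {x})) ` J) = \<Union>(S ` (J - {i})) \<union> (S i - {x})"
    using iJ by auto
  moreover have "finite J"
    using J I by (rule finite_subset)
  then have "card J = Suc (card (J - {i}))"
    using iJ by (rule card_Suc_Diff1[symmetric])
  ultimately show "card (\<Union>(S ` (J - {i})) \<union> (S i - {x})) \<le> card (J - {i})"
    using viol by simp
qed

text \<open>Rado's lemma: if removing either of two elements of S i destroyed Hall's condition,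
  submodularity of card on the two violating sets would violate it for S itself.\<close>
lemma hall_condition_remove_one_of_two:
  assumes I: "finite I" and fin: "\<forall>i\<in>I. finite (S i)" and hall: "hall_condition I S"
    and i: "i \<in> I" and x: "x1 \<in> S i" "x2 \<in> S i" "x1 \<noteq> x2"
  shows "hall_condition I (S(i := S i - {x1})) \<or> hall_condition I (S(i := S i - {x2}))"
proof (rule ccontr)
  let ?U = "\<lambda>K. \<Union>(S ` K)"
  assume "\<not> ?thesis"
  then obtain J1 J2 where J1: "J1 \<subseteq> I" "card (\<Union>((S(i := S i - {x1})) ` J1)) < card J1"
    and J2: "J2 \<subseteq> I" "card (\<Union>((S(i := S i - {x2})) ` J2)) < card J2"
    by (auto simp: hall_condition_def not_le)
  define K1 where "K1 = J1 - {i}"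
  define K2 where "K2 = J2 - {i}"
  define A1 where "A1 = ?U K1 \<union> (S i - {x1})"
  define A2 where "A2 = ?U K2 \<union> (S i - {x2})"
  have A1: "card A1 \<le> card K1" and A2: "card A2 \<le> card K2"
    using hall_violation_after_removal(2)[OF I hall J1] hall_violation_after_removal(2)[OF I hall J2]
    by (simp_all add: A1_def A2_def K1_def K2_def)
  have K: "K1 \<subseteq> I" "K2 \<subseteq> I" "finite K1" "finite K2" "i \<notin> K1 \<union> K2"
    using J1 J2 I by (auto simp: K1_def K2_def dest: finite_subset)
  have "\<forall>j\<in>K1 \<union> K2 \<union> {i}. finite (S j)"
    using fin K i by blast
  then have finA: "finite A1" "finite A2"
    using K by (simp_all add: A1_def A2_def)
  have "card (K1 \<union> K2) + 1 = card (insert i (K1 \<union> K2))"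
    using K by simp
  also have "\<dots> \<le> card (?U (insert i (K1 \<union> K2)))"
    by (rule hall_conditionD[OF hall]) (use K i in blast)
  also have "?U (insert i (K1 \<union> K2)) = A1 \<union> A2"
    using x by (auto simp: A1_def A2_def)
  finally have union: "card (K1 \<union> K2) + 1 \<le> card (A1 \<union> A2)" .
  have "card (K1 \<inter> K2) \<le> card (?U (K1 \<inter> K2))"
    by (rule hall_conditionD[OF hall]) (use K in blast)
  also have "\<dots> \<le> card (A1 \<inter> A2)"
    using finA by (intro card_mono) (auto simp add: A1_def A2_def)
  finally have inter: "card (K1 \<inter> K2) \<le> card (A1 \<inter> A2)" .
  have "card K1 + card K2 + 1 = card (K1 \<union> K2) + 1 + card (K1 \<inter> K2)"
    using card_Un_Int[OF K(3,4)] by simp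
  also have "\<dots> \<le> card (A1 \<union> A2) + card (A1 \<inter> A2)"
    using union inter by (rule add_mono)
  also have "\<dots> = card A1 + card A2"
    using card_Un_Int[OF finA] by simp
  also have "\<dots> \<le> card K1 + card K2"
    using A1 A2 by (rule add_mono)
  finally show False by simp
qed

lemma hall_marriage_singletons:
  assumes hall: "hall_condition I S" and small: "\<forall>i\<in>I. finite (S i) \<and> card (S i) < 2"
  shows "\<exists>f. inj_on f I \<and> (\<forall>i\<in>I. f i \<in> S i)"
proof -
  have "\<forall>i\<in>I. \<exists>y. S i = {y}"
  proof
    fix i assume i: "i \<in> I"
    have "card {i} \<le> card (\<Union>(S ` {i}))"
      by (rule hall_conditionD[OF hall]) (use i in simp)
    moreover have "card (S i) < 2"
      using small i by blast
    ultimately have "card (S i) = Suc 0" by simp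
    then show "\<exists>y. S i = {y}" by (simp only: card_1_singleton_iff)
  qed
  from bchoice[OF this] obtain f where f: "\<forall>i\<in>I. S i = {f i}" by blast
  have "inj_on f I"
  proof (rule inj_onI)
    fix i j assume ij: "i \<in> I" "j \<in> I" "f i = f j"
    have "card {i, j} \<le> card (\<Union>(S ` {i, j}))"
      by (rule hall_conditionD[OF hall]) (use ij in simp)
    then show "i = j" using f ij by (cases "i = j") simp_all
  qed
  then show ?thesis using f by blast
qed

theorem hall_marriage:
  assumes "finite I" "\<forall>i\<in>I. finite (S i)" "hall_condition I S"
  shows "\<exists>f. inj_on f I \<and> (\<forall>i\<in>I. f i \<in> S i)"
  using assms
proof (induction "\<Sum>i\<in>I. card (S i)" arbitrary: S rule: less_induct)
  case less
  show ?case
  proof (cases "\<exists>i\<in>I. 2 \<le> card (S i)")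
    case False
    then have "\<forall>i\<in>I. finite (S i) \<and> card (S i) < 2"
      using less.prems(2) by (simp add: not_le)
    then show ?thesis by (rule hall_marriage_singletons[OF less.prems(3)])
  next
    case True
    then obtain i where i: "i \<in> I" and "\<not> card (S i) \<le> Suc 0" by auto
    then obtain x1 x2 where x12: "x1 \<in> S i" "x2 \<in> S i" "x1 \<noteq> x2"
      using less.prems(2) card_le_Suc0_iff_eq by blast
    obtain x where x: "x \<in> S i" and hall': "hall_condition I (S(i := S i - {x}))"
      using hall_condition_remove_one_of_two[OF less.prems i x12] x12 by blast
    let ?T = "S(i := S i - {x})"
    have "card (S i - {x}) < card (S i)"
      using less.prems(2) i x by (intro card_Diff1_less) auto
    then have "(\<Sum>j\<in>I. card (?T j)) < (\<Sum>j\<in>I. card (S j))"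
      using i by (intro sum_strict_mono_ex1[OF less.prems(1)]) auto
    moreover have "\<forall>j\<in>I. finite (?T j)"
      using less.prems(2) by simp
    ultimately obtain f where "inj_on f I" "\<forall>j\<in>I. f j \<in> ?T j"
      using less.hyps[OF _ less.prems(1) _ hall'] by blast
    then show ?thesis by (metis Diff_iff fun_upd_apply)
  qed
qed

lemma hall_condition_regular:
  assumes V: "finite V" and m: "0 < m"
    and rows: "\<forall>i\<in>V. card {j\<in>V. D i j} = m" and cols: "\<forall>j\<in>V. card {i\<in>V. D i j} = m"
  shows "hall_condition V (\<lambda>i. {j\<in>V. D i j})"
  unfolding hall_condition_def
proof (intro allI impI)
  fix J assume J: "J \<subseteq> V"
  define N where "N = (\<Union>i\<in>J. {j\<in>V. D i j})"
  have fin: "finite J" "finite N"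
    using J V by (auto simp: N_def dest: finite_subset)
  have "m * card J = card (SIGMA i:J. {j\<in>V. D i j})"
    using fin V rows J by (simp add: card_SigmaI subset_iff)
  also have "\<dots> \<le> card (SIGMA j:N. {i\<in>V. D i j})"
  proof (rule card_inj_on_le[where f = prod.swap])
    show "prod.swap ` (SIGMA i:J. {j\<in>V. D i j}) \<subseteq> (SIGMA j:N. {i\<in>V. D i j})"
      using J by (auto simp: N_def)
  qed (use fin V in auto)
  also have "\<dots> = m * card N"
    using fin V cols by (simp add: card_SigmaI N_def)
  finally show "card J \<le> card N"
    using m by simp
qed

lemma regular_relation_has_permutation:
  assumes V: "finite V" and m: "0 < m"
    and rows: "\<forall>i\<in>V. card {j\<in>V. D i j} = m" and cols: "\<forall>j\<in>V. card {i\<in>V. D i j} = m"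
  shows "\<exists>\<sigma>. \<sigma> permutes V \<and> (\<forall>i\<in>V. D i (\<sigma> i))"
proof -
  obtain f where f: "inj_on f V" "\<forall>i\<in>V. f i \<in> {j\<in>V. D i j}"
    using hall_marriage[OF V _ hall_condition_regular[OF assms]] V by auto
  define \<sigma> where "\<sigma> i = (if i \<in> V then f i else i)" for i
  have inj: "inj_on \<sigma> V" and sub: "\<sigma> ` V \<subseteq> V"
    using f by (auto simp: \<sigma>_def inj_on_def)
  have "\<sigma> ` V = V"
    using sub inj by (rule endo_inj_surj[OF V])
  with inj have "bij_betw \<sigma> V V"
    by (simp add: bij_betw_def)
  then have "\<sigma> permutes V"
    by (rule bij_imp_permutes) (simp add: \<sigma>_def)
  then show ?thesis
    using f by (auto simp: \<sigma>_def)
qed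

lemma regular_relation_remove_permutation:
  assumes \<sigma>: "\<sigma> permutes V" "\<forall>i\<in>V. D i (\<sigma> i)" and V: "finite V"
    and rows: "\<forall>i\<in>V. card {j\<in>V. D i j} = Suc m" and cols: "\<forall>j\<in>V. card {i\<in>V. D i j} = Suc m"
  shows "\<forall>i\<in>V. card {j\<in>V. D i j \<and> \<sigma> i \<noteq> j} = m"
    and "\<forall>j\<in>V. card {i\<in>V. D i j \<and> \<sigma> i \<noteq> j} = m"
proof -
  show "\<forall>i\<in>V. card {j\<in>V. D i j \<and> \<sigma> i \<noteq> j} = m"
  proof
    fix i assume i: "i \<in> V"
    have "{j\<in>V. D i j \<and> \<sigma> i \<noteq> j} = {j\<in>V. D i j} - {\<sigma> i}"
      by auto
    moreover have "\<sigma> i \<in> {j\<in>V. D i j}"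
      using \<sigma> i by (simp add: permutes_in_image)
    ultimately show "card {j\<in>V. D i j \<and> \<sigma> i \<noteq> j} = m"
      using rows i V by simp
  qed
  show "\<forall>j\<in>V. card {i\<in>V. D i j \<and> \<sigma> i \<noteq> j} = m"
  proof
    fix j assume j: "j \<in> V"
    have "{i\<in>V. D i j \<and> \<sigma> i \<noteq> j} = {i\<in>V. D i j} - {inv \<sigma> j}"
      using permutes_inverses[OF \<sigma>(1)] by auto
    moreover have "inv \<sigma> j \<in> V"
      using j by (simp add: permutes_in_image[OF permutes_inv[OF \<sigma>(1)]])
    then have "inv \<sigma> j \<in> {i\<in>V. D i j}"
      using \<sigma>(2) permutes_inverses(1)[OF \<sigma>(1)] by force
    ultimately show "card {i\<in>V. D i j \<and> \<sigma> i \<noteq> j} = m"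
      using cols j V by simp
  qed
qed

theorem regular_relation_decomposes_into_permutations:
  assumes V: "finite V"
    and rows: "\<forall>i\<in>V. card {j\<in>V. D i j} = m" and cols: "\<forall>j\<in>V. card {i\<in>V. D i j} = m"
  shows "\<exists>\<sigma>. (\<forall>t<m. \<sigma> t permutes V) \<and>
           (\<forall>i\<in>V. \<forall>j\<in>V. card {t. t < m \<and> \<sigma> t i = j} = (if D i j then 1 else 0))"
  using rows cols
proof (induction m arbitrary: D)
  case 0
  then have "\<forall>i\<in>V. \<forall>j\<in>V. \<not> D i j"
    using V by auto
  then show ?case by auto
next
  case (Suc m)
  obtain \<sigma>0 where \<sigma>0: "\<sigma>0 permutes V" "\<forall>i\<in>V. D i (\<sigma>0 i)"
    using regular_relation_has_permutation[OF V _ Suc.prems] by blast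
  obtain \<sigma>' where \<sigma>': "\<forall>t<m. \<sigma>' t permutes V"
    and mult': "\<forall>i\<in>V. \<forall>j\<in>V. card {t. t < m \<and> \<sigma>' t i = j} = (if D i j \<and> \<sigma>0 i \<noteq> j then 1 else 0)"
    using Suc.IH[OF regular_relation_remove_permutation[OF \<sigma>0 V Suc.prems]] by blast
  define \<sigma> where "\<sigma> = \<sigma>'(m := \<sigma>0)"
  have "\<forall>t<Suc m. \<sigma> t permutes V"
    using \<sigma>' \<sigma>0 by (simp add: \<sigma>_def less_Suc_eq)
  moreover have "card {t. t < Suc m \<and> \<sigma> t i = j} = (if D i j then 1 else 0)"
    if ij: "i \<in> V" "j \<in> V" for i j
  proof -
    have "{t. t < Suc m \<and> \<sigma> t i = j} = {t. t < m \<and> \<sigma>' t i = j} \<union> (if \<sigma>0 i = j then {m} else {})"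
      by (auto simp: \<sigma>_def less_Suc_eq)
    then have "card {t. t < Suc m \<and> \<sigma> t i = j}
               = card {t. t < m \<and> \<sigma>' t i = j} + (if \<sigma>0 i = j then 1 else 0)"
      by (simp add: card_Un_disjoint)
    then show ?thesis
      using mult' \<sigma>0(2) ij by auto
  qed
  ultimately show ?case by blast
qed

abbreviation nonzeros :: "int list \<Rightarrow> int list" where
  "nonzeros xs \<equiv> filter (\<lambda>x. x \<noteq> 0) xs"

definition alternating :: "nat \<Rightarrow> int list" where
  "alternating L = map (\<lambda>i. (-1) ^ i) [0..<L]"

lemma length_alternating [simp]: "length (alternating L) = L"
  by (simp add: alternating_def)

lemma alternating_0 [simp]: "alternating 0 = []"
  by (simp add: alternating_def)

lemma nth_alternating [simp]: "i < L \<Longrightarrow> alternating L ! i = (-1) ^ i"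
  by (simp add: alternating_def)

lemma eq_alternating_iff: "ys = alternating (length ys) \<longleftrightarrow> (\<forall>i<length ys. ys ! i = (-1) ^ i)"
  by (metis length_alternating nth_alternating nth_equalityI)

lemma alternating_Suc: "alternating (Suc L) = alternating L @ [(-1) ^ L]"
  by (simp add: alternating_def)

lemma sum_list_alternating: "sum_list (alternating L) = (if odd L then 1 else 0)"
  by (induction L) (simp_all add: alternating_Suc)

lemma one_star_alt_iff:
  "one_star_alt xs \<longleftrightarrow> sign_entries xs \<and> nonzeros xs = alternating (length (nonzeros xs))"
  by (simp add: one_star_alt_def Let_def eq_alternating_iff)

lemma alt_sign_vec_iff: "alt_sign_vec xs \<longleftrightarrow> one_star_alt xs \<and> odd (length (nonzeros xs))"
proof (cases "one_star_alt xs")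
  case True
  define L where "L = length (nonzeros xs)"
  have nz: "nonzeros xs = alternating L"
    using True by (simp add: one_star_alt_iff L_def)
  have "(nonzeros xs \<noteq> [] \<and> last (nonzeros xs) = 1) \<longleftrightarrow> odd L"
    unfolding nz by (cases L) (simp_all add: alternating_Suc minus_one_power_iff)
  then show ?thesis
    using True by (simp add: alt_sign_vec_def L_def)
qed (simp add: alt_sign_vec_def)

lemma sum_list_nonzeros: "sum_list (nonzeros xs) = sum_list xs"
  by (induction xs) auto

lemma sum_list_one_star_alt:
  "one_star_alt xs \<Longrightarrow> sum_list xs = (if odd (length (nonzeros xs)) then 1 else 0)"
  by (metis one_star_alt_iff sum_list_alternating sum_list_nonzeros)

lemma sum_list_alt_sign_vec: "alt_sign_vec xs \<Longrightarrow> sum_list xs = 1"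
  by (simp add: alt_sign_vec_iff sum_list_one_star_alt)

lemma nonzeros_indicator:
  "nonzeros (map (\<lambda>x. if P x then 1 else 0) xs) = replicate (length (filter P xs)) 1"
  by (induction xs) auto

lemma alt_sign_vec_append_indicator:
  assumes v: "one_star_alt v"
    and count: "length (filter P xs) = (if even (length (nonzeros v)) then 1 else 0)"
  shows "alt_sign_vec (v @ map (\<lambda>x. if P x then 1 else 0) xs)"
proof -
  define L where "L = length (nonzeros v)"
  let ?w = "map (\<lambda>x. if P x then 1 else 0) xs"
  have "nonzeros v = alternating L"
    using v by (simp add: one_star_alt_iff L_def)
  then have nz: "nonzeros (v @ ?w) = alternating (if even L then Suc L else L)"
    using count by (simp add: nonzeros_indicator alternating_Suc L_def)
  have "sign_entries (v @ ?w)"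
    using v by (auto simp: one_star_alt_def sign_entries_def)
  with nz show ?thesis
    by (simp add: alt_sign_vec_iff one_star_alt_iff)
qed

declare upt_Suc [simp del]

lemma alt_sign_vec_indicator:
  "length (filter P xs) = 1 \<Longrightarrow> alt_sign_vec (map (\<lambda>x. if P x then 1 else 0) xs)"
  using alt_sign_vec_append_indicator[of "[]" P xs] by (simp add: one_star_alt_def sign_entries_def)

lemma sum_list_map_upt: "sum_list (map f [1..<k+1]) = sum f {1..k}"
  by (simp add: sum_set_upt_conv_sum_list_nat[symmetric] atLeastLessThanSuc_atLeastAtMost)

lemma map_upt_append_shift:
  assumes "k \<le> n"
  shows "map f [1..<n+1] = map f [1..<k+1] @ map (\<lambda>t. f (t + k + 1)) [0..<n-k]"
proof -
  have "[1..<n+1] = [1..<k+1] @ [k+1..<n+1]"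
    using upt_add_eq_append[of 1 "k+1" "n-k"] assms by simp
  moreover have "[k+1..<n+1] = map (\<lambda>t. t + k + 1) [0..<n-k]"
    using map_add_upt[of "k+1" "n-k"] assms by (simp add: add.assoc)
  ultimately show ?thesis
    by simp
qed

lemma card_eq_by_double_counting:
  fixes F :: "'s \<Rightarrow> 'j \<Rightarrow> int"
  assumes S: "finite S" and J: "finite J"
    and cols: "\<forall>j\<in>J. (\<Sum>s\<in>S. F s j) = (if P j then 1 else 0)"
    and rows: "\<forall>s\<in>S. (\<Sum>j\<in>J. F s j) = 1"
  shows "card {j\<in>J. P j} = card S"
proof -
  have "int (card {j\<in>J. P j}) = (\<Sum>j\<in>J. if P j then 1 else 0)"
    using J by (simp add: sum.inter_filter[symmetric])
  also have "\<dots> = (\<Sum>j\<in>J. \<Sum>s\<in>S. F s j)"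
    using cols by simp
  also have "\<dots> = (\<Sum>s\<in>S. \<Sum>j\<in>J. F s j)"
    by (rule sum.swap)
  also have "\<dots> = int (card S)"
    using rows by simp
  finally show ?thesis by simp
qed

lemma card_even_nonzeros_stack:
  fixes F :: "nat \<Rightarrow> nat \<Rightarrow> int"
  assumes kn: "k \<le> n"
    and vert: "\<forall>j\<in>{1..n}. one_star_alt (map (\<lambda>s. F s j) [1..<k+1])"
    and horiz: "\<forall>s\<in>{1..k}. alt_sign_vec (map (F s) [1..<n+1])"
  shows "card {j\<in>{1..n}. even (length (nonzeros (map (\<lambda>s. F s j) [1..<k+1])))} = n - k"
proof -
  let ?odd = "\<lambda>j. odd (length (nonzeros (map (\<lambda>s. F s j) [1..<k+1])))"
  have "card {j\<in>{1..n}. ?odd j} = card {1..k}"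
  proof (rule card_eq_by_double_counting)
    show "\<forall>j\<in>{1..n}. (\<Sum>s\<in>{1..k}. F s j) = (if ?odd j then 1 else 0)"
      using vert sum_list_one_star_alt by (simp only: sum_list_map_upt[symmetric]) blast
    show "\<forall>s\<in>{1..k}. (\<Sum>j\<in>{1..n}. F s j) = 1"
      using horiz sum_list_alt_sign_vec by (simp only: sum_list_map_upt[symmetric]) blast
  qed simp_all
  moreover have "card ({1..n} - {j\<in>{1..n}. ?odd j}) = card {1..n} - card {j\<in>{1..n}. ?odd j}"
    by (rule card_Diff_subset) auto
  moreover have "{j\<in>{1..n}. \<not> ?odd j} = {1..n} - {j\<in>{1..n}. ?odd j}"
    by auto
  ultimately show ?thesis
    by simp
qed

definition perm_matrix :: "(nat \<Rightarrow> nat) \<Rightarrow> nat \<Rightarrow> nat \<Rightarrow> int" where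
  "perm_matrix \<sigma> i j = (if \<sigma> i = j then 1 else 0)"

lemma is_perm_matrix_perm_matrix: "\<sigma> permutes {1..n} \<Longrightarrow> is_perm_matrix n (perm_matrix \<sigma>)"
  unfolding is_perm_matrix_def perm_matrix_def by blast

lemma is_ASM_perm_matrix:
  assumes \<sigma>: "\<sigma> permutes {1..n}"
  shows "is_ASM n (perm_matrix \<sigma>)"
  unfolding is_ASM_def
proof (intro conjI ballI)
  fix i assume "i \<in> {1..n}"
  then have "\<sigma> i \<in> {1..n}"
    by (simp only: permutes_in_image[OF \<sigma>])
  then have "{j. \<sigma> i = j} \<inter> {1..n} = {\<sigma> i}"
    by blast
  then show "alt_sign_vec (row (perm_matrix \<sigma>) n i)"
    unfolding row_def perm_matrix_def
    by (intro alt_sign_vec_indicator)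
      (simp add: distinct_length_filter atLeastLessThanSuc_atLeastAtMost)
next
  fix j assume "j \<in> {1..n}"
  then have "{i. \<sigma> i = j} \<inter> {1..n} = {inv \<sigma> j}"
    using \<sigma> permutes_inverses[OF \<sigma>] permutes_in_image[OF permutes_inv[OF \<sigma>]] by auto
  then show "alt_sign_vec (col (perm_matrix \<sigma>) n j)"
    unfolding col_def perm_matrix_def
    by (intro alt_sign_vec_indicator)
      (simp add: distinct_length_filter atLeastLessThanSuc_atLeastAtMost)
qed

lemma is_ASHM_of_ASM_slices:
  assumes "\<forall>s\<in>{1..n}. is_ASM n (H s)"
    and "\<forall>i\<in>{1..n}. \<forall>j\<in>{1..n}. alt_sign_vec (map (\<lambda>s. H s i j) [1..<n+1])"
  shows "is_ASHM n H"
  using assms by (simp add: is_ASHM_def is_ASM_def row_def col_def)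

text \<open>Position (i,j) is open when the vertical line of A_1, ..., A_k through it sums to 0,
  so that it still needs a final 1.\<close>
definition open_position :: "(nat \<Rightarrow> nat \<Rightarrow> nat \<Rightarrow> int) \<Rightarrow> nat \<Rightarrow> nat \<Rightarrow> nat \<Rightarrow> bool" where
  "open_position A k i j \<longleftrightarrow> even (length (nonzeros (map (\<lambda>s. A s i j) [1..<k+1])))"

lemma open_positions_regular:
  assumes kn: "k \<le> n"
    and ASM: "\<forall>s\<in>{1..k}. is_ASM n (A s)"
    and vert: "\<forall>i\<in>{1..n}. \<forall>j\<in>{1..n}. one_star_alt (map (\<lambda>s. A s i j) [1..<k+1])"
  shows "\<forall>i\<in>{1..n}. card {j\<in>{1..n}. open_position A k i j} = n - k"
    and "\<forall>j\<in>{1..n}. card {i\<in>{1..n}. open_position A k i j} = n - k"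
proof -
  show "\<forall>i\<in>{1..n}. card {j\<in>{1..n}. open_position A k i j} = n - k"
  proof
    fix i assume i: "i \<in> {1..n}"
    show "card {j\<in>{1..n}. open_position A k i j} = n - k"
      unfolding open_position_def
      by (rule card_even_nonzeros_stack[OF kn])
        (use vert ASM i in \<open>simp_all add: is_ASM_def row_def\<close>)
  qed
  show "\<forall>j\<in>{1..n}. card {i\<in>{1..n}. open_position A k i j} = n - k"
  proof
    fix j assume j: "j \<in> {1..n}"
    show "card {i\<in>{1..n}. open_position A k i j} = n - k"
      unfolding open_position_def
      by (rule card_even_nonzeros_stack[OF kn])
        (use vert ASM j in \<open>simp_all add: is_ASM_def col_def\<close>)
  qed
qed

definition completion ::
    "(nat \<Rightarrow> nat \<Rightarrow> nat \<Rightarrow> int) \<Rightarrow> nat \<Rightarrow> (nat \<Rightarrow> nat \<Rightarrow> nat) \<Rightarrow> nat \<Rightarrow> nat \<Rightarrow> nat \<Rightarrow> int" where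
  "completion A k \<sigma> s = (if s \<le> k then A s else perm_matrix (\<sigma> (s - k - 1)))"

lemma is_ASM_completion:
  assumes "\<forall>s\<in>{1..k}. is_ASM n (A s)" and "\<forall>t<n-k. \<sigma> t permutes {1..n}" and "s \<in> {1..n}"
  shows "is_ASM n (completion A k \<sigma> s)"
  using assms by (auto simp: completion_def intro: is_ASM_perm_matrix)

lemma is_perm_matrix_completion:
  assumes "\<forall>t<n-k. \<sigma> t permutes {1..n}" and "s \<in> {k+1..n}"
  shows "is_perm_matrix n (completion A k \<sigma> s)"
proof -
  have "\<sigma> (s - k - 1) permutes {1..n}"
    using assms by auto
  then show ?thesis
    using assms(2) by (simp add: completion_def is_perm_matrix_perm_matrix)
qed

lemma alt_sign_vec_completion_vertical:
  assumes kn: "k \<le> n" and v: "one_star_alt (map (\<lambda>s. A s i j) [1..<k+1])"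
    and mult: "card {t. t < n-k \<and> \<sigma> t i = j} = (if open_position A k i j then 1 else 0)"
  shows "alt_sign_vec (map (\<lambda>s. completion A k \<sigma> s i j) [1..<n+1])"
proof -
  have "map (\<lambda>s. completion A k \<sigma> s i j) [1..<n+1]
        = map (\<lambda>s. A s i j) [1..<k+1] @ map (\<lambda>t. if \<sigma> t i = j then 1 else 0) [0..<n-k]"
    using map_upt_append_shift[OF kn, of "\<lambda>s. completion A k \<sigma> s i j"]
    by (simp add: completion_def perm_matrix_def)
  moreover have "length (filter (\<lambda>t. \<sigma> t i = j) [0..<n-k]) = card {t. t < n-k \<and> \<sigma> t i = j}"
    by (simp add: distinct_length_filter Int_def conj_commute)
  ultimately show ?thesis
    using v mult by (simp add: alt_sign_vec_append_indicator open_position_def)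
qed

theorem mainTheorem11:
  fixes n k :: nat and A :: "nat \<Rightarrow> nat \<Rightarrow> nat \<Rightarrow> int"
  assumes "k < n"
    and "\<forall>s\<in>{1..k}. is_ASM n (A s)"
    and "\<forall>i\<in>{1..n}. \<forall>j\<in>{1..n}. one_star_alt (map (\<lambda>s. A s i j) [1..<k+1])"
  shows "\<exists>B :: nat \<Rightarrow> nat \<Rightarrow> nat \<Rightarrow> int.
           (\<forall>s\<in>{1..k}. \<forall>i\<in>{1..n}. \<forall>j\<in>{1..n}. B s i j = A s i j) \<and>
           (\<forall>s\<in>{k+1..n}. is_perm_matrix n (B s)) \<and>
           is_ASHM n B"
proof -
  have kn: "k \<le> n"
    using assms(1) by simp
  obtain \<sigma> where \<sigma>: "\<forall>t<n-k. \<sigma> t permutes {1..n}"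
    and mult: "\<forall>i\<in>{1..n}. \<forall>j\<in>{1..n}.
                 card {t. t < n-k \<and> \<sigma> t i = j} = (if open_position A k i j then 1 else 0)"
    using regular_relation_decomposes_into_permutations[of "{1..n}"]
      open_positions_regular[OF kn assms(2,3)] by blast
  have "is_ASHM n (completion A k \<sigma>)"
    using is_ASM_completion[OF assms(2) \<sigma>] alt_sign_vec_completion_vertical[OF kn] assms(3) mult
    by (intro is_ASHM_of_ASM_slices) auto
  moreover have "\<forall>s\<in>{k+1..n}. is_perm_matrix n (completion A k \<sigma> s)"
    using is_perm_matrix_completion[OF \<sigma>] by blast
  ultimately show ?thesis
    by (intro exI[of _ "completion A k \<sigma>"]) (simp add: completion_def)
qed

end
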